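(* Suppose $n$ qubits are distributed among a finite set of parties $M$, $n=\sum_{\alpha\in M}n_\alpha$, and let $S,S'\subseteq G^n$ be arbitrary linear subspaces. The following are equivalent: (1) there exist $u_\alpha\in\mathrm{Sp}(n_\alpha)$, $\alpha\in M$, such that $S'=\big(\bigoplus_{\alpha\in M}u_\alpha\big)\cdot S$, where the direct sum refers to the decomposition $G^n=\bigoplus_{\alpha\in M}G^{n_\alpha}$ into the parties' local subspaces; (2) there exists a linear invertible map $T:S\to S'$ such that (i) $\omega(T(f)_\alpha,T(g)_\alpha)=\omega(f_\alpha,g_\alpha)$ for all $f,g\in S$ and $\alpha\in M$, and (ii) $T\cdot S_{\hat\alpha}=S'_{\hat\alpha}$ for all $\alpha\in M$.
   Context: Let $G^n\cong\mathbb{F}_2^{2n}$, with elements written $f=(a_1,b_1,\dots,a_n,b_n)$, equipped with the symplectic form $\omega(f,f')=\sum_{j=1}^n(a_jb_j'+b_ja_j')\bmod 2$. $\mathrm{Sp}(n)$ denotes the group of linear bijections $u:G^n\to G^n$ with $\omega(u(f),u(g))=\omega(f,g)$ for all $f,g$. When party $\alpha\in M$ holds $n_\alpha$ of the $n$ qubits, $G^n=\bigoplus_\alpha G^{n_\alpha}$ (coordinates $(a_j,b_j)$ grouped by the owner of qubit $j$), $f_\alpha\in G^{n_\alpha}$ denotes the component of $f$ for party $\alpha$, and $\omega(f_\alpha,g_\alpha)$ is the symplectic form of $G^{n_\alpha}$. For a subspace $S\subseteq G^n$, the co-local subspace is $S_{\hat\alpha}=\{g\in S:g_\alpha=0\}$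 (equal to $S$ if $n_\alpha=0$). *)

theory Defs
  imports Main "HOL-Library.Z2"
begin

text \<open>An element f of G^n = F_2^{2n} is represented as a function from qubit indices to
  pairs (a_j, b_j) over the two-element field bit, vanishing for j >= n.\<close>

type_synonym pvec = "nat \<Rightarrow> bit \<times> bit"

definition zerov :: pvec where "zerov = (\<lambda>j. (0, 0))"

definition vadd :: "pvec \<Rightarrow> pvec \<Rightarrow> pvec" where
  "vadd f g = (\<lambda>j. (fst (f j) + fst (g j), snd (f j) + snd (g j)))"

definition smul :: "bit \<Rightarrow> pvec \<Rightarrow> pvec" where
  "smul c f = (\<lambda>j. (c * fst (f j), c * snd (f j)))"

definition GJ :: "nat set \<Rightarrow> pvec set" where
  "GJ J = {f. \<forall>j. j \<notin> J \<longrightarrow> f j = (0, 0)}"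

abbreviation Gn :: "nat \<Rightarrow> pvec set" where
  "Gn n \<equiv> GJ {..<n}"

definition omegaJ :: "nat set \<Rightarrow> pvec \<Rightarrow> pvec \<Rightarrow> bit" where
  "omegaJ J f g = (\<Sum>j\<in>J. fst (f j) * snd (g j) + snd (f j) * fst (g j))"

definition lin_subspace :: "nat \<Rightarrow> pvec set \<Rightarrow> bool" where
  "lin_subspace n S \<longleftrightarrow> S \<subseteq> Gn n \<and> zerov \<in> S \<and>
     (\<forall>f\<in>S. \<forall>g\<in>S. vadd f g \<in> S) \<and> (\<forall>c. \<forall>f\<in>S. smul c f \<in> S)"

definition linear_on :: "pvec set \<Rightarrow> (pvec \<Rightarrow> pvec) \<Rightarrow> bool" where
  "linear_on S T \<longleftrightarrow> (\<forall>f\<in>S. \<forall>g\<in>S. T (vadd f g) = vadd (T f) (T g)) \<and>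
     (\<forall>c. \<forall>f\<in>S. T (smul c f) = smul c (T f))"

definition SpJ :: "nat set \<Rightarrow> (pvec \<Rightarrow> pvec) set" where
  "SpJ J = {u. bij_betw u (GJ J) (GJ J) \<and> linear_on (GJ J) u \<and>
     (\<forall>f\<in>GJ J. \<forall>g\<in>GJ J. omegaJ J (u f) (u g) = omegaJ J f g)}"

definition qubits :: "nat \<Rightarrow> (nat \<Rightarrow> 'p) \<Rightarrow> 'p \<Rightarrow> nat set" where
  "qubits n own \<alpha> = {j. j < n \<and> own j = \<alpha>}"

definition restr :: "nat set \<Rightarrow> pvec \<Rightarrow> pvec" where
  "restr J f = (\<lambda>j. if j \<in> J then f j else (0, 0))"

text \<open>Direct sum of local maps: (\<Oplus> u_alpha)(f) = \<Sum>_alpha u_alpha(f_alpha).\<close>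
definition dsum :: "nat \<Rightarrow> (nat \<Rightarrow> 'p) \<Rightarrow> ('p \<Rightarrow> pvec \<Rightarrow> pvec) \<Rightarrow> pvec \<Rightarrow> pvec" where
  "dsum n own u f = (\<lambda>j. if j < n then u (own j) (restr (qubits n own (own j)) f) j else (0, 0))"

definition coloc :: "nat \<Rightarrow> (nat \<Rightarrow> 'p) \<Rightarrow> pvec set \<Rightarrow> 'p \<Rightarrow> pvec set" where
  "coloc n own S \<alpha> = {g \<in> S. restr (qubits n own \<alpha>) g = zerov}"

end

(* Over F_2 additivity already gives linearity, so all maps below are only required to be
   additive.  If S' is the image of S under a direct sum of local symplectic maps, that direct sum
   itself is the required T.  Conversely, for each party alpha the co-locality condition on T says
   that f_alpha = g_alpha iff T(f)_alpha = T(g)_alpha for f, g in S, so f_alpha |-> T(f)_alpha is a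
   well-defined injective map on the projection of S to the qubits of alpha, and it preserves the
   local symplectic form.  By Witt's extension theorem it extends to some u_alpha in Sp(n_alpha),
   and the direct sum of the u_alpha agrees with T on S.  Witt's theorem is proved by adjoining
   one vector at a time; the vectors to adjoin are found using the nondegeneracy of omega, in the
   form "every additive functional on a subspace is omega(v, -)". *)

theory Submission
  imports Defs "HOL-Library.Function_Algebras" "HOL-Library.Product_Plus"
begin

(* Keep bit arithmetic as field arithmetic, and keep sums of pvecs from being expanded
   pointwise into lambda terms by the simplifier. *)
declare add_bit_eq_xor [simp del] mult_bit_eq_and [simp del]
  plus_fun_apply [simp del] zero_fun_apply [simp del]

lemma vadd_eq_plus [simp]: "vadd f g = f + g"
  by (simp add: vadd_def plus_fun_def plus_prod_def)

lemma zerov_eq_zero [simp]: "zerov = 0"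
  by (simp add: zerov_def zero_fun_def zero_prod_def)

lemma smul_eq_if: "smul c f = (if c = 0 then 0 else f)"
  by (cases c) (simp_all add: smul_def fun_eq_iff prod_eq_iff zero_fun_apply)

lemma pvec_add_self [simp]: "(f::pvec) + f = 0"
  by (simp add: fun_eq_iff prod_eq_iff plus_fun_apply zero_fun_apply)

lemma pvec_add_cancel_left [simp]: "(f::pvec) + (f + g) = g"
  by (simp flip: add.assoc)

lemma pvec_add_eq_0_iff: "(f::pvec) + g = 0 \<longleftrightarrow> f = g"
  by (metis pvec_add_cancel_left add.right_neutral)

definition additive_on :: "'a::plus set \<Rightarrow> ('a \<Rightarrow> 'b::plus) \<Rightarrow> bool" where
  "additive_on A f \<longleftrightarrow> (\<forall>x\<in>A. \<forall>y\<in>A. f (x + y) = f x + f y)"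

lemma additive_onD: "additive_on A f \<Longrightarrow> x \<in> A \<Longrightarrow> y \<in> A \<Longrightarrow> f (x + y) = f x + f y"
  by (simp add: additive_on_def)

lemma additive_on_zero:
  fixes f :: "'a::monoid_add \<Rightarrow> 'b::cancel_comm_monoid_add"
  assumes "additive_on A f" "0 \<in> A"
  shows "f 0 = 0"
  using additive_onD[OF assms(1,2,2)] by simp

lemma linear_on_iff_additive_on: "0 \<in> S \<Longrightarrow> linear_on S T \<longleftrightarrow> additive_on S T"
  by (auto simp: linear_on_def additive_on_def smul_eq_if additive_on_zero)

lemma GJ_zero [simp]: "0 \<in> GJ J"
  by (simp add: GJ_def zero_fun_apply zero_prod_def)

lemma GJ_add: "f \<in> GJ J \<Longrightarrow> g \<in> GJ J \<Longrightarrow> f + g \<in> GJ J"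
  by (simp add: GJ_def plus_fun_apply)

lemma finite_GJ:
  assumes "finite J" shows "finite (GJ J)"
proof -
  have "finite (UNIV :: bit set)"
    using finite_subset[of UNIV "{0, 1 :: bit}"] bit_not_zero_iff by blast
  then have "finite (UNIV :: (bit \<times> bit) set)"
    by (simp flip: UNIV_Times_UNIV)
  then show ?thesis
    using finite_set_of_finite_funs[OF assms, of UNIV "(0, 0)"] by (simp add: GJ_def)
qed

lemma restr_in_GJ [simp]: "restr J f \<in> GJ J"
  by (simp add: GJ_def restr_def)

lemma restr_add: "restr J (f + g) = restr J f + restr J g"
  by (simp add: restr_def fun_eq_iff plus_fun_apply zero_fun_apply zero_prod_def)

lemma restr_empty [simp]: "restr {} f = 0"
  by (simp add: restr_def fun_eq_iff zero_fun_apply zero_prod_def)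

lemma restr_id: "f \<in> GJ J \<Longrightarrow> restr J f = f"
  by (auto simp: restr_def GJ_def)

lemma restr_eq_iff_add: "restr J f = restr J g \<longleftrightarrow> restr J (f + g) = 0"
  by (simp add: restr_add pvec_add_eq_0_iff)

lemma omegaJ_add_left: "omegaJ J (f + g) h = omegaJ J f h + omegaJ J g h"
  by (simp add: omegaJ_def sum.distrib[symmetric] algebra_simps plus_fun_apply)

lemma omegaJ_commute: "omegaJ J f g = omegaJ J g f"
  by (simp add: omegaJ_def algebra_simps)

lemma omegaJ_add_right: "omegaJ J h (f + g) = omegaJ J h f + omegaJ J h g"
  by (metis omegaJ_add_left omegaJ_commute)

lemma omegaJ_self [simp]: "omegaJ J f f = 0"
  by (simp add: omegaJ_def mult.commute)

lemma omegaJ_restr [simp]: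
  "omegaJ J (restr J f) g = omegaJ J f g" "omegaJ J f (restr J g) = omegaJ J f g"
  by (simp_all add: omegaJ_def restr_def)

definition subspace_in :: "nat set \<Rightarrow> pvec set \<Rightarrow> bool" where
  "subspace_in J A \<longleftrightarrow> A \<subseteq> GJ J \<and> 0 \<in> A \<and> (\<forall>x\<in>A. \<forall>y\<in>A. x + y \<in> A)"

lemma subspace_inD:
  assumes "subspace_in J A"
  shows "A \<subseteq> GJ J" "0 \<in> A" "x \<in> A \<Longrightarrow> y \<in> A \<Longrightarrow> x + y \<in> A"
  using assms by (auto simp: subspace_in_def)

lemma subspace_in_add_iff: "subspace_in J A \<Longrightarrow> a \<in> A \<Longrightarrow> x + a \<in> A \<longleftrightarrow> x \<in> A"
  by (metis subspace_inD(3) add.commute pvec_add_cancel_left)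

definition adjoin :: "pvec \<Rightarrow> pvec set \<Rightarrow> pvec set" where
  "adjoin v A = A \<union> (+) v ` A"

lemma adjoin_cases:
  assumes "x \<in> adjoin v A"
  obtains "x \<in> A" | a where "a \<in> A" "x = v + a"
  using assms by (auto simp: adjoin_def)

lemma subspace_adjoin:
  assumes A: "subspace_in J A" and v: "v \<in> GJ J"
  shows "subspace_in J (adjoin v A)"
  unfolding subspace_in_def
proof (intro conjI ballI)
  show "adjoin v A \<subseteq> GJ J" "0 \<in> adjoin v A"
    using subspace_inD[OF A] v by (auto simp: adjoin_def GJ_add)
  fix x y assume "x \<in> adjoin v A" "y \<in> adjoin v A"
  then show "x + y \<in> adjoin v A"
    by (elim adjoin_cases) (auto simp: adjoin_def ac_simps subspace_inD(3)[OF A])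
qed

lemma psubset_adjoin: "0 \<in> A \<Longrightarrow> v \<notin> A \<Longrightarrow> A \<subset> adjoin v A"
  by (force simp: adjoin_def)

section \<open>Extension of additive maps and nondegeneracy of omega\<close>

definition adjoin_map :: "pvec set \<Rightarrow> pvec \<Rightarrow> 'b::plus \<Rightarrow> (pvec \<Rightarrow> 'b) \<Rightarrow> pvec \<Rightarrow> 'b" where
  "adjoin_map A v c f x = (if x \<in> A then f x else c + f (v + x))"

lemma adjoin_map_in [simp]: "x \<in> A \<Longrightarrow> adjoin_map A v c f x = f x"
  by (simp add: adjoin_map_def)

lemma adjoin_map_out:
  "subspace_in J A \<Longrightarrow> v \<notin> A \<Longrightarrow> a \<in> A \<Longrightarrow> adjoin_map A v c f (v + a) = c + f a"
  by (simp add: adjoin_map_def subspace_in_add_iff)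

lemma additive_on_adjoin_map:
  fixes f :: "pvec \<Rightarrow> 'b::ab_group_add"
  assumes A: "subspace_in J A" and v: "v \<notin> A" and f: "additive_on A f" and c: "c + c = 0"
  shows "additive_on (adjoin v A) (adjoin_map A v c f)"
  unfolding additive_on_def
proof (intro ballI)
  note ext_out = adjoin_map_out[OF A v] and add_in = subspace_inD(3)[OF A]
    and add_f = additive_onD[OF f]
  fix x y assume "x \<in> adjoin v A" "y \<in> adjoin v A"
  then show "adjoin_map A v c f (x + y) = adjoin_map A v c f x + adjoin_map A v c f y"
  proof (elim adjoin_cases)
    assume "x \<in> A" "y \<in> A"
    then show ?thesis by (simp add: add_in add_f)
  next
    fix b assume "x \<in> A" "b \<in> A" "y = v + b"
    moreover have "x + (v + b) = v + (x + b)" by (rule add.left_commute)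
    ultimately show ?thesis
      by (simp only: ext_out add_in add_f adjoin_map_in) (simp add: ac_simps)
  next
    fix a assume "a \<in> A" "x = v + a" "y \<in> A"
    moreover have "v + a + y = v + (a + y)" by (rule add.assoc)
    ultimately show ?thesis
      by (simp only: ext_out add_in add_f adjoin_map_in) (simp add: ac_simps)
  next
    fix a b assume "a \<in> A" "x = v + a" "b \<in> A" "y = v + b"
    moreover have "v + a + (v + b) = a + b" by (simp add: ac_simps)
    moreover have "c + f a + (c + f b) = f a + f b"
      using c by (metis add.assoc add.left_commute add_0)
    ultimately show ?thesis
      by (simp only: ext_out add_in add_f adjoin_map_in)
  qed
qed

lemma extend_to_GJ_by_adjoin:
  assumes J: "finite J" and A: "subspace_in J A" and P: "P A \<phi>"
    and step: "\<And>B \<psi>. subspace_in J B \<Longrightarrow> B \<noteq> GJ J \<Longrightarrow> P B \<psi> \<Longrightarrow>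
      \<exists>v \<psi>'. v \<in> GJ J - B \<and> P (adjoin v B) \<psi>' \<and> (\<forall>b\<in>B. \<psi>' b = \<psi> b)"
  shows "\<exists>\<psi>. P (GJ J) \<psi> \<and> (\<forall>a\<in>A. \<psi> a = \<phi> a)"
  using A P
proof (induction "card (GJ J - A)" arbitrary: A \<phi> rule: less_induct)
  case less
  show ?case
  proof (cases "A = GJ J")
    case True
    then show ?thesis using less.prems by blast
  next
    case False
    then obtain v \<psi>' where v: "v \<in> GJ J - A" and \<psi>': "P (adjoin v A) \<psi>'" "\<forall>a\<in>A. \<psi>' a = \<phi> a"
      using step less.prems by blast
    have B: "subspace_in J (adjoin v A)"
      using subspace_adjoin less.prems(1) v by blast
    have "GJ J - adjoin v A \<subset> GJ J - A"
      using psubset_adjoin[of A v] subspace_inD[OF less.prems(1)] subspace_inD[OF B] v by blast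
    then have "card (GJ J - adjoin v A) < card (GJ J - A)"
      by (simp add: psubset_card_mono finite_GJ[OF J])
    then show ?thesis
      using less.hyps[OF _ B \<psi>'(1)] \<psi>'(2) psubset_adjoin[of A v] by (metis Un_iff adjoin_def)
  qed
qed

lemma additive_functional_extends:
  assumes "finite J" "subspace_in J A" "additive_on A (\<mu> :: pvec \<Rightarrow> bit)"
  shows "\<exists>\<mu>'. additive_on (GJ J) \<mu>' \<and> (\<forall>a\<in>A. \<mu>' a = \<mu> a)"
proof (rule extend_to_GJ_by_adjoin[where P = additive_on, OF assms])
  fix B and \<psi> :: "pvec \<Rightarrow> bit"
  assume B: "subspace_in J B" "B \<noteq> GJ J" "additive_on B \<psi>"
  then obtain v where "v \<in> GJ J - B"
    using subspace_inD(1) by blast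
  then show "\<exists>v \<psi>'. v \<in> GJ J - B \<and> additive_on (adjoin v B) \<psi>' \<and> (\<forall>b\<in>B. \<psi>' b = \<psi> b)"
    using additive_on_adjoin_map[OF B(1) _ B(3), of v 0]
    by (intro exI[of _ v] exI[of _ "adjoin_map B v 0 \<psi>"]) auto
qed

definition unit_a :: "nat \<Rightarrow> pvec" where
  "unit_a j = (\<lambda>k. if k = j then (1, 0) else (0, 0))"

definition unit_b :: "nat \<Rightarrow> pvec" where
  "unit_b j = (\<lambda>k. if k = j then (0, 1) else (0, 0))"

lemma restr_insert:
  "j \<notin> K \<Longrightarrow> restr (insert j K) g = restr K g + smul (fst (g j)) (unit_a j) + smul (snd (g j)) (unit_b j)"
  by (auto simp: restr_def smul_def unit_a_def unit_b_def fun_eq_iff plus_fun_apply zero_prod_def)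

lemma additive_functional_restr_sum:
  assumes "finite K" "K \<subseteq> J" "additive_on (GJ J) \<mu>"
  shows "\<mu> (restr K g) = (\<Sum>j\<in>K. fst (g j) * \<mu> (unit_a j) + snd (g j) * \<mu> (unit_b j))"
  using assms(1,2)
proof (induction K rule: finite_induct)
  case empty
  show ?case
    using additive_on_zero[OF assms(3) GJ_zero] by simp
next
  case (insert j K)
  have "unit_a j \<in> GJ J" "unit_b j \<in> GJ J" "restr K g \<in> GJ J"
    using insert.prems by (auto simp: GJ_def unit_a_def unit_b_def restr_def)
  with insert show ?case
    by (simp add: restr_insert additive_onD[OF assms(3)] GJ_add smul_eq_if
        additive_on_zero[OF assms(3)] ac_simps)
qed

lemma additive_functional_eq_omegaJ:
  assumes "finite J" "additive_on (GJ J) \<mu>"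
  shows "\<exists>v\<in>GJ J. \<forall>g\<in>GJ J. omegaJ J v g = \<mu> g"
proof
  let ?v = "\<lambda>k. if k \<in> J then (\<mu> (unit_b k), \<mu> (unit_a k)) else (0, 0)"
  show "?v \<in> GJ J"
    by (simp add: GJ_def)
  show "\<forall>g\<in>GJ J. omegaJ J ?v g = \<mu> g"
  proof
    fix g assume "g \<in> GJ J"
    then have "\<mu> g = \<mu> (restr J g)"
      by (simp add: restr_id)
    also have "\<dots> = omegaJ J ?v g"
      unfolding additive_functional_restr_sum[OF assms(1) order_refl assms(2)] omegaJ_def
      by (intro sum.cong) (auto simp: ac_simps)
    finally show "omegaJ J ?v g = \<mu> g" ..
  qed
qed

lemma additive_functional_omegaJ_representable:
  assumes "finite J" "subspace_in J A" "additive_on A \<mu>"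
  shows "\<exists>v\<in>GJ J. \<forall>a\<in>A. omegaJ J v a = \<mu> a"
proof -
  obtain \<mu>' where "additive_on (GJ J) \<mu>'" "\<forall>a\<in>A. \<mu>' a = \<mu> a"
    using additive_functional_extends[OF assms] by blast
  then show ?thesis
    using additive_functional_eq_omegaJ[OF assms(1)] subspace_inD(1)[OF assms(2)] by (metis subsetD)
qed

section \<open>Witt's extension theorem\<close>

definition partial_isometry :: "nat set \<Rightarrow> pvec set \<Rightarrow> (pvec \<Rightarrow> pvec) \<Rightarrow> bool" where
  "partial_isometry J A \<phi> \<longleftrightarrow> additive_on A \<phi> \<and> inj_on \<phi> A \<and> \<phi> ` A \<subseteq> GJ J \<and>
     (\<forall>x\<in>A. \<forall>y\<in>A. omegaJ J (\<phi> x) (\<phi> y) = omegaJ J x y)"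

lemma partial_isometryD:
  assumes "partial_isometry J A \<phi>"
  shows "additive_on A \<phi>" "inj_on \<phi> A" "\<phi> ` A \<subseteq> GJ J"
    "x \<in> A \<Longrightarrow> y \<in> A \<Longrightarrow> omegaJ J (\<phi> x) (\<phi> y) = omegaJ J x y"
  using assms by (auto simp: partial_isometry_def)

lemma subspace_image_partial_isometry:
  assumes A: "subspace_in J A" and \<phi>: "partial_isometry J A \<phi>"
  shows "subspace_in J (\<phi> ` A)"
  unfolding subspace_in_def
proof (intro conjI ballI)
  show "\<phi> ` A \<subseteq> GJ J"
    using partial_isometryD(3)[OF \<phi>] .
  show "0 \<in> \<phi> ` A"
    using additive_on_zero[OF partial_isometryD(1)[OF \<phi>]] subspace_inD(2)[OF A] by force
  fix x y assume "x \<in> \<phi> ` A" "y \<in> \<phi> ` A"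
  then obtain a b where "a \<in> A" "b \<in> A" "x = \<phi> a" "y = \<phi> b"
    by blast
  then show "x + y \<in> \<phi> ` A"
    using additive_onD[OF partial_isometryD(1)[OF \<phi>]] subspace_inD(3)[OF A]
    by (metis image_eqI)
qed

lemma partial_isometry_inverse:
  assumes A: "subspace_in J A" and \<phi>: "partial_isometry J A \<phi>"
  shows "partial_isometry J (\<phi> ` A) (the_inv_into A \<phi>)"
proof -
  note inj = partial_isometryD(2)[OF \<phi>]
  have inv: "the_inv_into A \<phi> (\<phi> a) = a" if "a \<in> A" for a
    using the_inv_into_f_f[OF inj that] .
  have "additive_on (\<phi> ` A) (the_inv_into A \<phi>)"
    unfolding additive_on_def
    using inv additive_onD[OF partial_isometryD(1)[OF \<phi>]] subspace_inD(3)[OF A]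
    by (auto simp flip: additive_onD[OF partial_isometryD(1)[OF \<phi>]])
  then show ?thesis
    using inj_on_the_inv_into[OF inj] inv subspace_inD(1)[OF A] partial_isometryD(4)[OF \<phi>]
    by (auto simp: partial_isometry_def)
qed

lemma partial_isometry_partner_or_orthogonal:
  assumes J: "finite J" and A: "subspace_in J A" and \<phi>: "partial_isometry J A \<phi>"
    and w: "w \<in> GJ J - \<phi> ` A"
  shows "(\<exists>v\<in>GJ J - A. \<forall>a\<in>A. omegaJ J w (\<phi> a) = omegaJ J v a) \<or>
    (\<exists>s\<in>GJ J - \<phi> ` A. \<forall>a\<in>A. omegaJ J s (\<phi> a) = 0)"
proof -
  have "additive_on A (\<lambda>a. omegaJ J w (\<phi> a))"
    using additive_onD[OF partial_isometryD(1)[OF \<phi>]]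
    by (simp add: additive_on_def omegaJ_add_right)
  then obtain v where v: "v \<in> GJ J" "\<forall>a\<in>A. omegaJ J v a = omegaJ J w (\<phi> a)"
    using additive_functional_omegaJ_representable[OF J A] by blast
  show ?thesis
  proof (cases "v \<in> A")
    case False
    then show ?thesis
      using v by (intro disjI1 bexI[of _ v]) auto
  next
    case True
    let ?s = "w + \<phi> v"
    have "?s \<in> GJ J"
      using w True partial_isometryD(3)[OF \<phi>] by (auto intro: GJ_add)
    moreover have "?s \<notin> \<phi> ` A"
      using w True subspace_in_add_iff[OF subspace_image_partial_isometry[OF A \<phi>]] by blast
    moreover have "omegaJ J ?s (\<phi> a) = 0" if "a \<in> A" for a
      using v that True by (simp add: omegaJ_add_left partial_isometryD(4)[OF \<phi>])
    ultimately show ?thesis by blast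
  qed
qed

lemma isometry_extension_pair:
  assumes J: "finite J" and A: "subspace_in J A" "A \<noteq> GJ J" and \<phi>: "partial_isometry J A \<phi>"
  shows "\<exists>v\<in>GJ J - A. \<exists>w\<in>GJ J - \<phi> ` A. \<forall>a\<in>A. omegaJ J w (\<phi> a) = omegaJ J v a"
proof -
  let ?B = "\<phi> ` A" and ?\<psi> = "the_inv_into A \<phi>"
  note inj = partial_isometryD(2)[OF \<phi>]
  have B: "subspace_in J ?B"
    using subspace_image_partial_isometry[OF A(1) \<phi>] .
  have "card ?B < card (GJ J)"
    using card_image[OF inj] psubset_card_mono[OF finite_GJ[OF J]] subspace_inD(1)[OF A(1)] A(2)
    by auto
  then obtain w0 where w0: "w0 \<in> GJ J - ?B"
    using subspace_inD(1)[OF B] by (metis Diff_iff less_irrefl subsetI subset_antisym)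
  obtain v0 where v0: "v0 \<in> GJ J - A"
    using subspace_inD(1)[OF A(1)] A(2) by blast
  have \<psi>_img: "?\<psi> ` ?B = A" and \<psi>: "\<And>a. a \<in> A \<Longrightarrow> ?\<psi> (\<phi> a) = a"
    using the_inv_into_onto[OF inj] the_inv_into_f_f[OF inj] by auto
  have forward: "(\<exists>v\<in>GJ J - A. \<forall>a\<in>A. omegaJ J w0 (\<phi> a) = omegaJ J v a) \<or>
      (\<exists>s\<in>GJ J - ?B. \<forall>a\<in>A. omegaJ J s (\<phi> a) = 0)"
    using partial_isometry_partner_or_orthogonal[OF J A(1) \<phi> w0] .
  have "(\<exists>w\<in>GJ J - ?B. \<forall>b\<in>?B. omegaJ J v0 (?\<psi> b) = omegaJ J w b) \<or>
      (\<exists>r\<in>GJ J - A. \<forall>b\<in>?B. omegaJ J r (?\<psi> b) = 0)"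
    using partial_isometry_partner_or_orthogonal[OF J B partial_isometry_inverse[OF A(1) \<phi>]] v0 \<psi>_img by simp
  then have backward: "(\<exists>w\<in>GJ J - ?B. \<forall>a\<in>A. omegaJ J w (\<phi> a) = omegaJ J v0 a) \<or>
      (\<exists>r\<in>GJ J - A. \<forall>a\<in>A. omegaJ J r a = 0)"
    using \<psi> by (auto simp: eq_commute[of "omegaJ J v0 _"])
  \<comment> \<open>Either v0 or w0 has a partner, or there are vectors r and s orthogonal to A and to
    \<phi> ` A respectively, which then form a pair themselves.\<close>
  have orthogonal_pair: "\<exists>v\<in>GJ J - A. \<exists>w\<in>GJ J - ?B. \<forall>a\<in>A. omegaJ J w (\<phi> a) = omegaJ J v a"
    if "r \<in> GJ J - A" "\<forall>a\<in>A. omegaJ J r a = 0"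
      "s \<in> GJ J - ?B" "\<forall>a\<in>A. omegaJ J s (\<phi> a) = 0" for r s
    using that by (intro bexI[of _ r] bexI[of _ s]) auto
  show ?thesis
    using forward backward v0 w0 orthogonal_pair by blast
qed

lemma partial_isometry_adjoin:
  assumes A: "subspace_in J A" and \<phi>: "partial_isometry J A \<phi>"
    and v: "v \<in> GJ J - A" and w: "w \<in> GJ J - \<phi> ` A"
    and pair: "\<forall>a\<in>A. omegaJ J w (\<phi> a) = omegaJ J v a"
  shows "partial_isometry J (adjoin v A) (adjoin_map A v w \<phi>)"
proof -
  let ?\<psi> = "adjoin_map A v w \<phi>"
  note iso = partial_isometryD[OF \<phi>]
  have out: "?\<psi> (v + a) = w + \<phi> a" if "a \<in> A" for a
    using adjoin_map_out[OF A _ that] v by blast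
  have pair': "omegaJ J (\<phi> a) w = omegaJ J a v" if "a \<in> A" for a
    using pair that by (simp add: omegaJ_commute[of J "\<phi> a" w] omegaJ_commute[of J a v])
  have w_plus_out: "w + \<phi> b \<notin> \<phi> ` A" if "b \<in> A" for b
    using w that subspace_in_add_iff[OF subspace_image_partial_isometry[OF A \<phi>], of "\<phi> b" w]
    by blast
  have "additive_on (adjoin v A) ?\<psi>"
    using additive_on_adjoin_map[OF A _ iso(1)] v by simp
  moreover have "inj_on ?\<psi> (adjoin v A)"
  proof (rule inj_onI)
    fix x y assume "x \<in> adjoin v A" "y \<in> adjoin v A" and eq: "?\<psi> x = ?\<psi> y"
    then show "x = y"
    proof (elim adjoin_cases)
      assume "x \<in> A" "y \<in> A"
      then show ?thesis using eq inj_onD[OF iso(2)] by simp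
    next
      fix b assume "x \<in> A" "b \<in> A" "y = v + b"
      then have "\<phi> x = w + \<phi> b" using eq by (simp add: out)
      then show ?thesis using w_plus_out[OF \<open>b \<in> A\<close>] imageI[OF \<open>x \<in> A\<close>, of \<phi>] by simp
    next
      fix a assume "a \<in> A" "x = v + a" "y \<in> A"
      then have "\<phi> y = w + \<phi> a" using eq by (simp add: out)
      then show ?thesis using w_plus_out[OF \<open>a \<in> A\<close>] imageI[OF \<open>y \<in> A\<close>, of \<phi>] by simp
    next
      fix a b assume "a \<in> A" "x = v + a" "b \<in> A" "y = v + b"
      then show ?thesis using eq inj_onD[OF iso(2)] by (simp add: out)
    qed
  qed
  moreover have "?\<psi> ` adjoin v A \<subseteq> GJ J"
    using iso(3) w by (auto elim!: adjoin_cases simp: out intro!: GJ_add)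
  moreover have "omegaJ J (?\<psi> x) (?\<psi> y) = omegaJ J x y" if "x \<in> adjoin v A" "y \<in> adjoin v A" for x y
    using that
  proof (elim adjoin_cases)
    assume "x \<in> A" "y \<in> A"
    then show ?thesis by (simp add: iso(4))
  next
    fix b assume "x \<in> A" "b \<in> A" "y = v + b"
    then show ?thesis by (simp add: out omegaJ_add_right pair' iso(4))
  next
    fix a assume "a \<in> A" "x = v + a" "y \<in> A"
    then show ?thesis by (simp add: out omegaJ_add_left pair iso(4))
  next
    fix a b assume "a \<in> A" "x = v + a" "b \<in> A" "y = v + b"
    then show ?thesis
      by (simp add: out omegaJ_add_left omegaJ_add_right pair pair' iso(4))
  qed
  ultimately show ?thesis
    by (simp add: partial_isometry_def)
qed

lemma SpJ_iff_partial_isometry: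
  assumes J: "finite J"
  shows "u \<in> SpJ J \<longleftrightarrow> partial_isometry J (GJ J) u"
proof
  assume "u \<in> SpJ J"
  then show "partial_isometry J (GJ J) u"
    by (simp add: SpJ_def partial_isometry_def bij_betw_def linear_on_iff_additive_on)
next
  assume u: "partial_isometry J (GJ J) u"
  note iso = partial_isometryD[OF u]
  have "u ` GJ J = GJ J"
    using card_subset_eq[OF finite_GJ[OF J] iso(3)] card_image[OF iso(2)] by simp
  then show "u \<in> SpJ J"
    using iso by (simp add: SpJ_def bij_betw_def linear_on_iff_additive_on)
qed

theorem witt_extension:
  assumes J: "finite J" and A: "subspace_in J A" and \<phi>: "partial_isometry J A \<phi>"
  shows "\<exists>u\<in>SpJ J. \<forall>a\<in>A. u a = \<phi> a"
proof -
  have "\<exists>\<psi>. partial_isometry J (GJ J) \<psi> \<and> (\<forall>a\<in>A. \<psi> a = \<phi> a)"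
  proof (rule extend_to_GJ_by_adjoin[where P = "partial_isometry J", OF J A \<phi>])
    fix B \<psi> assume B: "subspace_in J B" "B \<noteq> GJ J" and \<psi>: "partial_isometry J B \<psi>"
    then obtain v w where "v \<in> GJ J - B" "w \<in> GJ J - \<psi> ` B"
      "\<forall>b\<in>B. omegaJ J w (\<psi> b) = omegaJ J v b"
      using isometry_extension_pair[OF J] by blast
    then show "\<exists>v \<psi>'. v \<in> GJ J - B \<and> partial_isometry J (adjoin v B) \<psi>' \<and> (\<forall>b\<in>B. \<psi>' b = \<psi> b)"
      using partial_isometry_adjoin[OF B(1) \<psi>]
      by (intro exI[of _ v] exI[of _ "adjoin_map B v w \<psi>"]) auto
  qed
  then show ?thesis
    using SpJ_iff_partial_isometry[OF J] by blast
qed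

lemma inj_on_factor:
  assumes "\<forall>x\<in>A. \<forall>y\<in>A. q x = q y \<longleftrightarrow> p x = p y"
  shows "\<exists>\<phi>. inj_on \<phi> (p ` A) \<and> (\<forall>x\<in>A. \<phi> (p x) = q x)"
proof (intro exI conjI)
  let ?\<phi> = "q \<circ> inv_into A p"
  show "\<forall>x\<in>A. ?\<phi> (p x) = q x"
    using assms by (simp add: inv_into_into f_inv_into_f)
  show "inj_on ?\<phi> (p ` A)"
    using assms by (auto intro!: inj_onI simp: inv_into_into f_inv_into_f)
qed

lemma restr_component_extends_to_SpJ:
  assumes J: "finite J" and S: "lin_subspace n S" and T: "linear_on S T" "inj_on T S"
    and om: "\<forall>f\<in>S. \<forall>g\<in>S. omegaJ J (T f) (T g) = omegaJ J f g"
    and ker: "T ` {g\<in>S. restr J g = 0} = {g\<in>T ` S. restr J g = 0}"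
  shows "\<exists>u\<in>SpJ J. \<forall>f\<in>S. u (restr J f) = restr J (T f)"
proof -
  have S0: "0 \<in> S" and S_add: "\<And>f g. f \<in> S \<Longrightarrow> g \<in> S \<Longrightarrow> f + g \<in> S"
    using S by (auto simp: lin_subspace_def)
  have T_add: "additive_on S T"
    using T(1) S0 by (simp add: linear_on_iff_additive_on)
  have ker_iff: "restr J (T f) = 0 \<longleftrightarrow> restr J f = 0" if "f \<in> S" for f
    using ker that inj_onD[OF T(2)] by (auto simp: image_iff)
  have same: "restr J (T f) = restr J (T g) \<longleftrightarrow> restr J f = restr J g" if "f \<in> S" "g \<in> S" for f g
    using ker_iff[OF S_add[OF that]] additive_onD[OF T_add that]
    by (simp add: restr_eq_iff_add[of J f] restr_eq_iff_add[of J "T f"])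
  obtain \<phi> where \<phi>: "inj_on \<phi> (restr J ` S)" "\<forall>f\<in>S. \<phi> (restr J f) = restr J (T f)"
    using inj_on_factor[of S "\<lambda>f. restr J (T f)" "restr J"] same by blast
  have sum_restr: "restr J f + restr J g \<in> restr J ` S" if "f \<in> S" "g \<in> S" for f g
    using S_add[OF that] by (simp flip: restr_add)
  have sub: "subspace_in J (restr J ` S)"
    unfolding subspace_in_def using S0 sum_restr by force
  have "additive_on (restr J ` S) \<phi>"
    unfolding additive_on_def
  proof (intro ballI)
    fix x y assume "x \<in> restr J ` S" "y \<in> restr J ` S"
    then obtain f g where fg: "f \<in> S" "g \<in> S" "x = restr J f" "y = restr J g"
      by blast
    have "\<phi> (x + y) = \<phi> (restr J (f + g))"
      using fg by (simp add: restr_add)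
    also have "\<dots> = restr J (T f + T g)"
      using fg \<phi>(2) S_add additive_onD[OF T_add] by simp
    also have "\<dots> = \<phi> x + \<phi> y"
      using fg \<phi>(2) by (simp add: restr_add)
    finally show "\<phi> (x + y) = \<phi> x + \<phi> y" .
  qed
  moreover have "omegaJ J (\<phi> x) (\<phi> y) = omegaJ J x y" if "x \<in> restr J ` S" "y \<in> restr J ` S" for x y
    using that \<phi>(2) om by auto
  ultimately have "partial_isometry J (restr J ` S) \<phi>"
    using \<phi> by (auto simp: partial_isometry_def)
  then obtain u where "u \<in> SpJ J" "\<forall>x\<in>restr J ` S. u x = \<phi> x"
    using witt_extension[OF J sub] by blast
  then show ?thesis
    using \<phi>(2) by auto
qed

section \<open>Local symplectic equivalence\<close>

lemma finite_qubits: "finite (qubits n own \<alpha>)"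
  by (rule finite_subset[of _ "{..<n}"]) (auto simp: qubits_def)

lemma pvec_eq_by_parties:
  assumes "x \<in> Gn n" "y \<in> Gn n" "\<forall>j<n. own j \<in> M"
    and "\<forall>\<alpha>\<in>M. restr (qubits n own \<alpha>) x = restr (qubits n own \<alpha>) y"
  shows "x = y"
proof
  fix j
  show "x j = y j"
  proof (cases "j < n")
    case True
    then have "own j \<in> M"
      using assms(3) by blast
    then have "restr (qubits n own (own j)) x j = restr (qubits n own (own j)) y j"
      using assms(4) by simp
    then show ?thesis
      using True by (simp add: restr_def qubits_def)
  next
    case False
    then show ?thesis
      using assms(1,2) by (simp add: GJ_def)
  qed
qed

lemma dsum_in_Gn: "dsum n own u f \<in> Gn n"
  by (simp add: dsum_def GJ_def)

lemma restr_dsum: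
  assumes "u \<alpha> ` GJ (qubits n own \<alpha>) \<subseteq> GJ (qubits n own \<alpha>)"
  shows "restr (qubits n own \<alpha>) (dsum n own u f) = u \<alpha> (restr (qubits n own \<alpha>) f)"
proof (rule ext)
  fix j
  show "restr (qubits n own \<alpha>) (dsum n own u f) j = u \<alpha> (restr (qubits n own \<alpha>) f) j"
  proof (cases "j \<in> qubits n own \<alpha>")
    case True
    then have "j < n" "own j = \<alpha>"
      by (simp_all add: qubits_def)
    have "restr (qubits n own \<alpha>) (dsum n own u f) j = dsum n own u f j"
      using True by (simp add: restr_def)
    also have "\<dots> = u \<alpha> (restr (qubits n own \<alpha>) f) j"
      using \<open>j < n\<close> \<open>own j = \<alpha>\<close> by (simp add: dsum_def)
    finally show ?thesis .
  next
    case False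
    have "u \<alpha> (restr (qubits n own \<alpha>) f) \<in> GJ (qubits n own \<alpha>)"
      using assms restr_in_GJ by blast
    then show ?thesis
      using False by (simp add: restr_def GJ_def)
  qed
qed

definition local_isometry ::
    "nat \<Rightarrow> (nat \<Rightarrow> 'p) \<Rightarrow> 'p set \<Rightarrow> pvec set \<Rightarrow> pvec set \<Rightarrow> (pvec \<Rightarrow> pvec) \<Rightarrow> bool" where
  "local_isometry n own M S S' T \<longleftrightarrow> bij_betw T S S' \<and> linear_on S T \<and>
     (\<forall>f\<in>S. \<forall>g\<in>S. \<forall>\<alpha>\<in>M.
        omegaJ (qubits n own \<alpha>) (T f) (T g) = omegaJ (qubits n own \<alpha>) f g) \<and>
     (\<forall>\<alpha>\<in>M. T ` coloc n own S \<alpha> = coloc n own S' \<alpha>)"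

lemma dsum_local_isometry:
  assumes own: "\<forall>j<n. own j \<in> M" and S: "lin_subspace n S"
    and u: "\<forall>\<alpha>\<in>M. u \<alpha> \<in> SpJ (qubits n own \<alpha>)"
  shows "local_isometry n own M S (dsum n own u ` S) (dsum n own u)"
proof -
  let ?T = "dsum n own u" and ?Q = "qubits n own"
  have iso: "partial_isometry (?Q \<alpha>) (GJ (?Q \<alpha>)) (u \<alpha>)" if "\<alpha> \<in> M" for \<alpha>
    using u that by (simp add: SpJ_iff_partial_isometry[OF finite_qubits])
  note u_add = additive_onD[OF partial_isometryD(1)[OF iso]]
    and u_inj = inj_onD[OF partial_isometryD(2)[OF iso]]
    and u_omega = partial_isometryD(4)[OF iso]
  have part: "restr (?Q \<alpha>) (?T f) = u \<alpha> (restr (?Q \<alpha>) f)" if "\<alpha> \<in> M" for \<alpha> f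
    by (rule restr_dsum[where u = u, OF partial_isometryD(3)[OF iso[OF that]]])
  have part_eq_iff:
    "restr (?Q \<alpha>) (?T f) = restr (?Q \<alpha>) (?T g) \<longleftrightarrow> restr (?Q \<alpha>) f = restr (?Q \<alpha>) g"
    if "\<alpha> \<in> M" for \<alpha> f g
    using u_inj[OF that] by (auto simp: part[OF that])
  have "?T (f + g) = ?T f + ?T g" for f g
    by (rule pvec_eq_by_parties[OF dsum_in_Gn GJ_add[OF dsum_in_Gn dsum_in_Gn] own])
      (simp add: part restr_add u_add)
  then have "linear_on S ?T"
    using S by (simp add: lin_subspace_def linear_on_iff_additive_on additive_on_def)
  moreover have "inj_on ?T S"
  proof (rule inj_onI)
    fix f g assume fg: "f \<in> S" "g \<in> S" and eq: "?T f = ?T g"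
    show "f = g"
    proof (rule pvec_eq_by_parties[OF _ _ own])
      show "f \<in> Gn n" "g \<in> Gn n"
        using fg S by (auto simp: lin_subspace_def)
      show "\<forall>\<alpha>\<in>M. restr (?Q \<alpha>) f = restr (?Q \<alpha>) g"
        using part_eq_iff[of _ f g] eq by simp
    qed
  qed
  moreover have "omegaJ (?Q \<alpha>) (?T f) (?T g) = omegaJ (?Q \<alpha>) f g" if "\<alpha> \<in> M" for \<alpha> f g
  proof -
    have "omegaJ (?Q \<alpha>) (?T f) (?T g) = omegaJ (?Q \<alpha>) (restr (?Q \<alpha>) (?T f)) (restr (?Q \<alpha>) (?T g))"
      by simp
    also have "\<dots> = omegaJ (?Q \<alpha>) f g"
      by (simp add: part[OF that] u_omega[OF that])
    finally show ?thesis .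
  qed
  moreover have "?T ` coloc n own S \<alpha> = coloc n own (?T ` S) \<alpha>" if "\<alpha> \<in> M" for \<alpha>
  proof -
    have "restr (?Q \<alpha>) (?T f) = 0 \<longleftrightarrow> restr (?Q \<alpha>) f = 0" for f
      using u_inj[OF that] additive_on_zero[OF partial_isometryD(1)[OF iso[OF that]]]
      by (auto simp: part[OF that])
    then show ?thesis
      by (auto simp: coloc_def)
  qed
  ultimately show ?thesis
    by (simp add: local_isometry_def bij_betw_def)
qed

lemma local_isometry_imp_dsum:
  assumes own: "\<forall>j<n. own j \<in> M" and S: "lin_subspace n S" and S': "lin_subspace n S'"
    and T: "local_isometry n own M S S' T"
  shows "\<exists>u. (\<forall>\<alpha>\<in>M. u \<alpha> \<in> SpJ (qubits n own \<alpha>)) \<and> S' = dsum n own u ` S"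
proof -
  let ?Q = "qubits n own"
  have T_inj: "inj_on T S" and T_img: "T ` S = S'" and T_lin: "linear_on S T"
    and T_omega: "\<forall>f\<in>S. \<forall>g\<in>S. \<forall>\<alpha>\<in>M. omegaJ (?Q \<alpha>) (T f) (T g) = omegaJ (?Q \<alpha>) f g"
    and T_coloc: "\<forall>\<alpha>\<in>M. T ` coloc n own S \<alpha> = coloc n own S' \<alpha>"
    using T by (auto simp: local_isometry_def bij_betw_def)
  have "\<forall>\<alpha>\<in>M. \<exists>v. v \<in> SpJ (?Q \<alpha>) \<and> (\<forall>f\<in>S. v (restr (?Q \<alpha>) f) = restr (?Q \<alpha>) (T f))"
  proof
    fix \<alpha> assume \<alpha>: "\<alpha> \<in> M"
    have "\<forall>f\<in>S. \<forall>g\<in>S. omegaJ (?Q \<alpha>) (T f) (T g) = omegaJ (?Q \<alpha>) f g"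
      using T_omega \<alpha> by blast
    moreover have "T ` {g\<in>S. restr (?Q \<alpha>) g = 0} = {g\<in>T ` S. restr (?Q \<alpha>) g = 0}"
      using T_coloc \<alpha> T_img by (simp add: coloc_def)
    ultimately have "\<exists>v\<in>SpJ (?Q \<alpha>). \<forall>f\<in>S. v (restr (?Q \<alpha>) f) = restr (?Q \<alpha>) (T f)"
      by (rule restr_component_extends_to_SpJ[OF finite_qubits S T_lin T_inj])
    then show "\<exists>v. v \<in> SpJ (?Q \<alpha>) \<and> (\<forall>f\<in>S. v (restr (?Q \<alpha>) f) = restr (?Q \<alpha>) (T f))"
      by blast
  qed
  from bchoice[OF this] obtain u where u: "\<forall>\<alpha>\<in>M. u \<alpha> \<in> SpJ (?Q \<alpha>) \<and>
      (\<forall>f\<in>S. u \<alpha> (restr (?Q \<alpha>) f) = restr (?Q \<alpha>) (T f))"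
    by blast
  have u_maps: "u \<alpha> ` GJ (?Q \<alpha>) \<subseteq> GJ (?Q \<alpha>)" if "\<alpha> \<in> M" for \<alpha>
    using u that by (simp add: SpJ_iff_partial_isometry[OF finite_qubits] partial_isometry_def)
  have "dsum n own u f = T f" if "f \<in> S" for f
  proof (rule pvec_eq_by_parties[OF dsum_in_Gn _ own])
    show "T f \<in> Gn n"
      using that T_img S' by (auto simp: lin_subspace_def)
    show "\<forall>\<alpha>\<in>M. restr (?Q \<alpha>) (dsum n own u f) = restr (?Q \<alpha>) (T f)"
      using that u by (simp add: restr_dsum[where u = u, OF u_maps])
  qed
  then have "dsum n own u ` S = T ` S"
    by (rule image_cong[OF refl])
  then show ?thesis
    using u T_img by auto
qed

theorem lemma1:
  fixes M :: "'p set" and own :: "nat \<Rightarrow> 'p" and n :: nat and S S' :: "pvec set"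
  assumes "finite M"
    and "\<forall>j<n. own j \<in> M"
    and "lin_subspace n S" and "lin_subspace n S'"
  shows "(\<exists>u. (\<forall>\<alpha>\<in>M. u \<alpha> \<in> SpJ (qubits n own \<alpha>)) \<and> S' = dsum n own u ` S)
     \<longleftrightarrow>
     (\<exists>T. bij_betw T S S' \<and> linear_on S T \<and>
        (\<forall>f\<in>S. \<forall>g\<in>S. \<forall>\<alpha>\<in>M.
           omegaJ (qubits n own \<alpha>) (T f) (T g) = omegaJ (qubits n own \<alpha>) f g) \<and>
        (\<forall>\<alpha>\<in>M. T ` coloc n own S \<alpha> = coloc n own S' \<alpha>))"
  unfolding local_isometry_def[symmetric]
proof
  assume "\<exists>u. (\<forall>\<alpha>\<in>M. u \<alpha> \<in> SpJ (qubits n own \<alpha>)) \<and> S' = dsum n own u ` S"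
  then obtain u where "\<forall>\<alpha>\<in>M. u \<alpha> \<in> SpJ (qubits n own \<alpha>)" and "S' = dsum n own u ` S"
    by blast
  then show "\<exists>T. local_isometry n own M S S' T"
    using dsum_local_isometry[OF assms(2,3)] by blast
next
  assume "\<exists>T. local_isometry n own M S S' T"
  then show "\<exists>u. (\<forall>\<alpha>\<in>M. u \<alpha> \<in> SpJ (qubits n own \<alpha>)) \<and> S' = dsum n own u ` S"
    using local_isometry_imp_dsum[OF assms(2-4)] by blast
qed

end
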